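(* Let $s$, $k$ and $i\le k$ be job indices with $r_i\ge r_s$. Let $C^{\mathrm{edf}}$ denote the minimum completion time $C_i(S)$ over all $(s,k)$-schedules $S$ having the earliest-deadline property that schedule job $i$. Then $$C^{\mathrm{edf}}=C_i(G_{s,k})=\max_{\substack{l\le i\\ r_s\le r_l\le r_i}}\ \min\{\,b\in\mathbb{Z} : b>r_i \text{ and } b\ge r_l+\mathrm{load}_i(r_l,b)\,\}.$$ In particular this value does not depend on $k$.
   Context: Time is discrete (slots $[t,t+1)$, $t\in\mathbb{Z}$). There are $n$ jobs, job $j$ with integer processing time $p_j\ge1$, release time $r_j$, deadline $d_j$; jobs are indexed so that $d_1<d_2<\dots<d_n$, release times are pairwise distinct, and the instance is feasible (some schedule executes every job $j$ for $p_j$ slots within $[r_j,d_j)$). A (partial) schedule assigns to each slot at most one job so that every job it schedules receives exactly $p_j$ slots within $[r_j,d_j)$. $C_j(S)$ is the end of the last slot of job $j$ in $S$ and $C_{\max}(S)=\max_j C_j(S)$. $S$ has the earliest-deadline property if whenever it is busy at slot $t$ it executes, among the jobs it schedules that are released by $t$ and not yet completed, the one with the smallest deadline. For $s\in\{1,\dots,n\}$, $k\in\{0,\dots,n\}$, an $(s,k)$-schedule is a schedule $S$ with $C_{\max}(S)\le d_k$ that schedules exactly the jobs $j\le k$ with $r_s\le r_j<C_{\max}(S)$; the empty schedule is an $(s,k)$-schedule with $C_{\max}=r_s$. The greedy schedule $G_{s,k}$ schedules the jobs $j\le k$ with $r_j\ge r_s$ by, at each slot $t=r_s,r_s+1,\dots$,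 executing the released, not yet completed such job of smallest deadline (idling if none). For a job $i$ and times $a<b$, $\mathrm{load}_i(a,b)=\sum_{j\le i,\ a\le r_j<b}p_j$. *)

theory Defs
  imports Main
begin

(* Jobs are indexed by 1..n; times are integers; slot t is [t,t+1).
   A schedule is a map from slots to "at most one job" (None = idle). *)
type_synonym schedule = "int \<Rightarrow> nat option"

definition sched_jobs :: "schedule \<Rightarrow> nat set" where
  "sched_jobs S = {j. \<exists>t. S t = Some j}"

definition compl :: "schedule \<Rightarrow> nat \<Rightarrow> int" where
  "compl S j = Max {t + 1 | t. S t = Some j}"

definition valid_sched :: "nat \<Rightarrow> (nat \<Rightarrow> int) \<Rightarrow> (nat \<Rightarrow> int) \<Rightarrow> (nat \<Rightarrow> int) \<Rightarrow> schedule \<Rightarrow> bool" where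
  "valid_sched n p r d S \<longleftrightarrow>
     (\<forall>t j. S t = Some j \<longrightarrow> 1 \<le> j \<and> j \<le> n \<and> r j \<le> t \<and> t < d j) \<and>
     (\<forall>j \<in> sched_jobs S. int (card {t. S t = Some j}) = p j)"

(* C_max(S); for the empty schedule the convention C_max = r_s of (s,k)-schedules is used *)
definition cmax :: "(nat \<Rightarrow> int) \<Rightarrow> nat \<Rightarrow> schedule \<Rightarrow> int" where
  "cmax r s S = (if sched_jobs S = {} then r s else Max (compl S ` sched_jobs S))"

definition sk_schedule :: "nat \<Rightarrow> (nat \<Rightarrow> int) \<Rightarrow> (nat \<Rightarrow> int) \<Rightarrow> (nat \<Rightarrow> int) \<Rightarrow> nat \<Rightarrow> nat \<Rightarrow> schedule \<Rightarrow> bool" where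
  "sk_schedule n p r d s k S \<longleftrightarrow>
     valid_sched n p r d S \<and> cmax r s S \<le> d k \<and>
     sched_jobs S = {j. 1 \<le> j \<and> j \<le> k \<and> r s \<le> r j \<and> r j < cmax r s S}"

definition edf :: "(nat \<Rightarrow> int) \<Rightarrow> (nat \<Rightarrow> int) \<Rightarrow> schedule \<Rightarrow> bool" where
  "edf r d S \<longleftrightarrow>
     (\<forall>t j. S t = Some j \<longrightarrow>
        (\<forall>j' \<in> sched_jobs S. r j' \<le> t \<and> t < compl S j' \<longrightarrow> d j \<le> d j'))"

(* greedy schedule G_{s,k}: choice at offset m (slot r_s + m) given remaining work R *)
definition gpick :: "(nat \<Rightarrow> int) \<Rightarrow> (nat \<Rightarrow> int) \<Rightarrow> nat \<Rightarrow> nat \<Rightarrow> (nat \<Rightarrow> int) \<Rightarrow> nat \<Rightarrow> nat option" where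
  "gpick r d s k R m =
     (let A = {j. 1 \<le> j \<and> j \<le> k \<and> r s \<le> r j \<and> r j \<le> r s + int m \<and> R j > 0} in
      if A = {} then None else Some (SOME j. j \<in> A \<and> (\<forall>j' \<in> A. d j \<le> d j')))"

(* remaining processing times at the start of slot r_s + m *)
fun grem :: "(nat \<Rightarrow> int) \<Rightarrow> (nat \<Rightarrow> int) \<Rightarrow> (nat \<Rightarrow> int) \<Rightarrow> nat \<Rightarrow> nat \<Rightarrow> nat \<Rightarrow> (nat \<Rightarrow> int)" where
  "grem p r d s k 0 = p"
| "grem p r d s k (Suc m) =
     (let R = grem p r d s k m in
      case gpick r d s k R m of None \<Rightarrow> R | Some j \<Rightarrow> R(j := R j - 1))"

definition greedy :: "(nat \<Rightarrow> int) \<Rightarrow> (nat \<Rightarrow> int) \<Rightarrow> (nat \<Rightarrow> int) \<Rightarrow> nat \<Rightarrow> nat \<Rightarrow> schedule" where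
  "greedy p r d s k t =
     (if t < r s then None
      else gpick r d s k (grem p r d s k (nat (t - r s))) (nat (t - r s)))"

definition load :: "(nat \<Rightarrow> int) \<Rightarrow> (nat \<Rightarrow> int) \<Rightarrow> nat \<Rightarrow> int \<Rightarrow> int \<Rightarrow> int" where
  "load p r i a b = (\<Sum>j \<in> {j. 1 \<le> j \<and> j \<le> i \<and> a \<le> r j \<and> r j < b}. p j)"

end

theory Submission
  imports Defs
begin

text \<open>
  Write \<open>b\<^sub>l\<close> for the least \<open>b > r\<^sub>i\<close> with \<open>b \<ge> r\<^sub>l + load\<^sub>i(r\<^sub>l, b)\<close>.
  Lower bound: in an earliest-deadline \<open>(s,k)\<close>-schedule \<open>S\<close> running \<open>i\<close>, every job \<open>j \<le> i\<close>
  released in \<open>[r\<^sub>l, C\<^sub>i(S))\<close> is processed entirely inside this interval, since a later slot of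
  \<open>j\<close> would have been preferred to \<open>i\<close> at the last slot of \<open>i\<close>; packing these jobs into the
  interval gives \<open>C\<^sub>i(S) \<ge> b\<^sub>l\<close>.
  Upper bound: in the greedy schedule take the last time \<open>T \<le> r\<^sub>i\<close> at which no job \<open>j \<le> i\<close>
  released before \<open>T\<close> has work left. From \<open>T\<close> until \<open>C\<^sub>i(G)\<close> the machine works only on jobs
  \<open>j \<le> i\<close>, all of which are finished at \<open>C\<^sub>i(G)\<close>; this backlog bookkeeping yields a job \<open>l\<close>
  released at \<open>T\<close> with \<open>C\<^sub>i(G) = b\<^sub>l\<close>. The same bookkeeping, compared with a feasible
  schedule, shows that the greedy schedule meets all deadlines.
\<close>

lemma sum_fun_upd:
  fixes f :: "'a \<Rightarrow> 'b::ab_group_add"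
  assumes "finite A" "x \<in> A"
  shows "sum (f(x := v)) A = sum f A - f x + v"
proof -
  have "sum (f(x := v)) A = v + sum (f(x := v)) (A - {x})"
    using sum.remove[OF assms, of "f(x := v)"] by simp
  also have "sum (f(x := v)) (A - {x}) = sum f (A - {x})"
    by (rule sum.cong) auto
  also have "sum f (A - {x}) = sum f A - f x"
    using sum.remove[OF assms, of f] by simp
  finally show ?thesis by simp
qed

lemma Least_le_int:
  fixes P :: "int \<Rightarrow> bool"
  assumes "P x" and lower: "\<And>y. P y \<Longrightarrow> lo \<le> y"
  shows "(LEAST b. P b) \<le> x"
proof -
  define M where "M = {b \<in> {lo..x}. P b}"
  have fin: "finite M" and xM: "x \<in> M"
    using assms unfolding M_def by (auto intro: finite_subset[of _ "{lo..x}"])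
  have m: "P (Min M)" "Min M \<le> x"
    using Min_in[OF fin] Min_le[OF fin xM] xM unfolding M_def by auto
  have "(LEAST b. P b) = Min M"
  proof (rule Least_equality)
    show "Min M \<le> y" if "P y" for y
    proof (cases "y \<le> x")
      case True
      then show ?thesis using that lower[OF that] fin unfolding M_def by (auto intro: Min_le)
    qed (use m in auto)
  qed (fact m)
  with m show ?thesis by simp
qed

subsection \<open>Schedules and load\<close>

lemma valid_sched_sum_p_le:
  assumes v: "valid_sched n p r d S" and fin: "finite A" and A: "A \<subseteq> sched_jobs S"
    and within: "\<And>x t. x \<in> A \<Longrightarrow> S t = Some x \<Longrightarrow> a \<le> t \<and> t < b" and "a \<le> b"
  shows "(\<Sum>x\<in>A. p x) \<le> b - a"
proof -
  have p: "p x = int (card {t. S t = Some x})" if "x \<in> A" for x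
    using v A that unfolding valid_sched_def by auto
  have sub: "{t. S t = Some x} \<subseteq> {a..<b}" if "x \<in> A" for x
    using within[OF that] by auto
  have "(\<Sum>x\<in>A. p x) = int (\<Sum>x\<in>A. card {t. S t = Some x})"
    using p by simp
  also have "(\<Sum>x\<in>A. card {t. S t = Some x}) = card (\<Union>x\<in>A. {t. S t = Some x})"
    by (rule card_UN_disjoint[symmetric]) (use fin sub in \<open>auto intro: finite_subset\<close>)
  also have "\<dots> \<le> card {a..<b}"
    by (rule card_mono) (use sub in auto)
  finally show ?thesis using \<open>a \<le> b\<close> by simp
qed

lemma compl_ge_slot:
  assumes "finite {t. S t = Some j}" "S t = Some j"
  shows "t + 1 \<le> compl S j"
proof -
  have "{t + 1 | t. S t = Some j} = (\<lambda>t. t + 1) ` {t. S t = Some j}" by auto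
  then show ?thesis unfolding compl_def using assms by (auto intro: Max_ge)
qed

lemma compl_last_slot:
  assumes "finite {t. S t = Some j}" "S t = Some j"
  obtains t' where "S t' = Some j" "compl S j = t' + 1"
proof -
  have eq: "{t + 1 | t. S t = Some j} = (\<lambda>t. t + 1) ` {t. S t = Some j}" by auto
  have "compl S j \<in> (\<lambda>t. t + 1) ` {t. S t = Some j}"
    unfolding compl_def eq using assms by (intro Max_in) auto
  then show ?thesis using that by blast
qed

lemma load_split:
  assumes "a \<le> b" "b \<le> c"
  shows "load p r i a c = load p r i a b + load p r i b c"
proof -
  have "{j. 1 \<le> j \<and> j \<le> i \<and> a \<le> r j \<and> r j < c} =
        {j. 1 \<le> j \<and> j \<le> i \<and> a \<le> r j \<and> r j < b} \<union> {j. 1 \<le> j \<and> j \<le> i \<and> b \<le> r j \<and> r j < c}"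
    using assms by auto
  moreover have "finite {j. 1 \<le> j \<and> j \<le> i \<and> P j}" for P
    by (rule finite_subset[of _ "{..i}"]) auto
  ultimately show ?thesis
    unfolding load_def by (simp add: sum.union_disjoint disjoint_iff)
qed

lemma load_empty_interval: "load p r i a a = 0"
  unfolding load_def by (rule sum.neutral) auto

definition load_bound :: "(nat \<Rightarrow> int) \<Rightarrow> (nat \<Rightarrow> int) \<Rightarrow> nat \<Rightarrow> nat \<Rightarrow> int" where
  "load_bound p r i l = (LEAST b. b > r i \<and> b \<ge> r l + load p r i (r l) b)"

lemma load_bound_le:
  assumes "r i < b" "r l + load p r i (r l) b \<le> b"
  shows "load_bound p r i l \<le> b"
  unfolding load_bound_def by (rule Least_le_int[where lo = "r i"]) (use assms in auto)

lemma load_bound_eqI: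
  assumes "r i < C" "r l + load p r i (r l) C \<le> C"
    and "\<And>b. r i < b \<Longrightarrow> b < C \<Longrightarrow> b < r l + load p r i (r l) b"
  shows "load_bound p r i l = C"
  unfolding load_bound_def
proof (rule Least_equality)
  show "C \<le> b" if "r i < b \<and> r l + load p r i (r l) b \<le> b" for b
    using that assms(3)[of b] by force
qed (use assms in auto)

subsection \<open>Earliest-deadline schedules\<close>

locale job_instance =
  fixes n :: nat and p r d :: "nat \<Rightarrow> int" and s k :: nat
  assumes p_pos: "\<And>j. 1 \<le> j \<Longrightarrow> j \<le> n \<Longrightarrow> p j \<ge> 1"
    and d_mono: "\<And>j j'. 1 \<le> j \<Longrightarrow> j < j' \<Longrightarrow> j' \<le> n \<Longrightarrow> d j < d j'"
    and k_le_n: "k \<le> n"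
begin

lemma d_le: "1 \<le> x \<Longrightarrow> x \<le> y \<Longrightarrow> y \<le> n \<Longrightarrow> d x \<le> d y"
  using d_mono by (cases "x = y") (auto intro: less_imp_le)

lemma le_if_d_le: "1 \<le> y \<Longrightarrow> x \<le> n \<Longrightarrow> d x \<le> d y \<Longrightarrow> x \<le> y"
  using d_mono[of y x] by force

lemma valid_sched_slot:
  assumes "valid_sched n p r d S" "S t = Some j"
  shows "1 \<le> j" "j \<le> n" "r j \<le> t" "t < d j"
  using assms unfolding valid_sched_def by auto

lemma finite_slots:
  assumes v: "valid_sched n p r d S" and j: "j \<in> sched_jobs S"
  shows "finite {t. S t = Some j}"
proof -
  obtain t where "S t = Some j" using j unfolding sched_jobs_def by auto
  then have "p j \<ge> 1" using p_pos valid_sched_slot[OF v] by blast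
  moreover have "int (card {t. S t = Some j}) = p j" using v j unfolding valid_sched_def by auto
  ultimately show ?thesis using card.infinite by fastforce
qed

lemma edf_slot_before_compl:
  assumes v: "valid_sched n p r d S" and e: "edf r d S"
    and iS: "i \<in> sched_jobs S" and xS: "x \<in> sched_jobs S" and "x \<le> i"
    and rx: "r x < compl S i" and t: "S t = Some x"
  shows "t < compl S i"
proof (rule ccontr)
  assume "\<not> t < compl S i"
  obtain t0 where "S t0 = Some i" using iS unfolding sched_jobs_def by auto
  then obtain ti where ti: "S ti = Some i" "compl S i = ti + 1"
    using compl_last_slot finite_slots[OF v iS] by metis
  have "t + 1 \<le> compl S x" by (rule compl_ge_slot[OF finite_slots[OF v xS] t])
  with \<open>\<not> t < compl S i\<close> ti have late: "ti < compl S x" "x \<noteq> i" by auto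
  \<comment> \<open>at the last slot of \<open>i\<close>, the job \<open>x\<close> is released and unfinished\<close>
  have "d i \<le> d x" using e ti(1) xS late(1) rx ti(2) unfolding edf_def by auto
  moreover have "d x < d i"
    using d_mono \<open>x \<le> i\<close> late(2) valid_sched_slot[OF v t] valid_sched_slot[OF v ti(1)] by simp
  ultimately show False by simp
qed

lemma load_bound_le_compl:
  assumes S: "sk_schedule n p r d s k S" and e: "edf r d S" and iS: "i \<in> sched_jobs S"
    and l: "r s \<le> r l" "r l \<le> r i"
  shows "load_bound p r i l \<le> compl S i"
proof -
  have v: "valid_sched n p r d S"
    and jobs: "sched_jobs S = {j. 1 \<le> j \<and> j \<le> k \<and> r s \<le> r j \<and> r j < cmax r s S}"
    using S unfolding sk_schedule_def by auto
  define C where "C = compl S i"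
  obtain t0 where "S t0 = Some i" using iS unfolding sched_jobs_def by auto
  then obtain ti where ti: "S ti = Some i" "C = ti + 1"
    using compl_last_slot finite_slots[OF v iS] unfolding C_def by metis
  have ri: "r i < C" using valid_sched_slot[OF v ti(1)] ti(2) by simp
  have "finite (sched_jobs S)" by (rule finite_subset[of _ "{..k}"]) (use jobs in auto)
  then have "C \<le> cmax r s S" unfolding C_def cmax_def using iS by auto
  define A where "A = {j. 1 \<le> j \<and> j \<le> i \<and> r l \<le> r j \<and> r j < C}"
  have finA: "finite A" unfolding A_def by (rule finite_subset[of _ "{..i}"]) auto
  have "i \<le> k" using iS jobs by simp
  then have AS: "A \<subseteq> sched_jobs S"
    unfolding A_def jobs using l \<open>C \<le> cmax r s S\<close> by auto
  have "r l \<le> t \<and> t < C" if "x \<in> A" "S t = Some x" for x t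
    using edf_slot_before_compl[OF v e iS, of x t] valid_sched_slot[OF v \<open>S t = Some x\<close>] AS that
    unfolding A_def C_def by auto
  then have "sum p A \<le> C - r l"
    by (rule valid_sched_sum_p_le[OF v finA AS]) (use ri l in auto)
  then have "r l + load p r i (r l) C \<le> C" unfolding load_def A_def by simp
  with ri show ?thesis unfolding C_def by (rule load_bound_le[where r = r and i = i and l = l])
qed

subsection \<open>The greedy schedule\<close>

definition eligible :: "nat set" where
  "eligible = {j. 1 \<le> j \<and> j \<le> k \<and> r s \<le> r j}"

abbreviation remaining :: "nat \<Rightarrow> nat \<Rightarrow> int" where
  "remaining m \<equiv> grem p r d s k m"

abbreviation pick :: "nat \<Rightarrow> nat option" where
  "pick m \<equiv> gpick r d s k (remaining m) m"

abbreviation G :: schedule where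
  "G \<equiv> greedy p r d s k"

definition avail :: "nat \<Rightarrow> nat set" where
  "avail m = {j \<in> eligible. r j \<le> r s + int m \<and> remaining m j > 0}"

lemma finite_eligible: "finite eligible"
  unfolding eligible_def by (rule finite_subset[of _ "{..k}"]) auto

lemma eligibleD: "j \<in> eligible \<Longrightarrow> 1 \<le> j \<and> j \<le> n \<and> j \<le> k \<and> r s \<le> r j"
  using k_le_n unfolding eligible_def by auto

lemma pick_eq_None_iff: "pick m = None \<longleftrightarrow> avail m = {}"
  unfolding gpick_def avail_def eligible_def Let_def by auto

lemma pick_SomeD:
  assumes "pick m = Some j"
  shows "j \<in> avail m" "\<And>j'. j' \<in> avail m \<Longrightarrow> d j \<le> d j'"
proof -
  have ne: "avail m \<noteq> {}" using pick_eq_None_iff[of m] assms by simp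
  have "finite (avail m)" using finite_eligible unfolding avail_def by auto
  then obtain x where "is_arg_min d (\<lambda>j. j \<in> avail m) x"
    using ex_is_arg_min_if_finite[OF _ ne] by blast
  then have ex: "\<exists>j. j \<in> avail m \<and> (\<forall>j'\<in>avail m. d j \<le> d j')"
    unfolding is_arg_min_def by (auto simp: not_less)
  have "{j. 1 \<le> j \<and> j \<le> k \<and> r s \<le> r j \<and> r j \<le> r s + int m \<and> remaining m j > 0} = avail m"
    unfolding avail_def eligible_def by auto
  then have "pick m = Some (SOME j. j \<in> avail m \<and> (\<forall>j'\<in>avail m. d j \<le> d j'))"
    using ne unfolding gpick_def Let_def by simp
  then show "j \<in> avail m" "\<And>j'. j' \<in> avail m \<Longrightarrow> d j \<le> d j'"
    using assms someI_ex[OF ex] by auto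
qed

lemma pick_eligible: "pick m = Some j \<Longrightarrow> j \<in> eligible"
  using pick_SomeD(1) avail_def by auto

declare grem.simps(2)[simp del]

lemma remaining_Suc:
  "remaining (Suc m) =
     (case pick m of None \<Rightarrow> remaining m | Some j \<Rightarrow> (remaining m)(j := remaining m j - 1))"
  by (simp add: Let_def grem.simps(2))

lemma remaining_Suc_picked: "pick m = Some j \<Longrightarrow> remaining (Suc m) j = remaining m j - 1"
  by (simp add: remaining_Suc)

lemma remaining_Suc_not_picked: "pick m \<noteq> Some j \<Longrightarrow> remaining (Suc m) j = remaining m j"
  by (cases "pick m") (auto simp: remaining_Suc)

lemma remaining_antimono: "m \<le> m' \<Longrightarrow> remaining m' j \<le> remaining m j"
proof (induction m' rule: dec_induct)
  case (step q)
  then show ?case by (cases "pick q") (auto simp: remaining_Suc)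
qed simp

lemma remaining_nonneg: "j \<in> eligible \<Longrightarrow> remaining m j \<ge> 0"
proof (induction m)
  case 0
  then show ?case using p_pos eligibleD by force
next
  case (Suc m)
  then show ?case
    using pick_SomeD(1)[of m j] remaining_Suc_not_picked[of m j] remaining_Suc_picked[of m j]
    by (force simp: avail_def)
qed

lemma remaining_unreleased: "r s + int m \<le> r j \<Longrightarrow> remaining m j = p j"
proof (induction m)
  case (Suc m)
  have "pick m \<noteq> Some j" using pick_SomeD(1)[of m j] Suc.prems unfolding avail_def by auto
  then show ?case using Suc by (simp add: remaining_Suc_not_picked)
qed simp

definition total_remaining :: "nat \<Rightarrow> int" where
  "total_remaining m = (\<Sum>x\<in>eligible. remaining m x)"

lemma total_remaining_nonneg: "total_remaining m \<ge> 0"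
  unfolding total_remaining_def using remaining_nonneg by (simp add: sum_nonneg)

lemma total_remaining_Suc:
  "total_remaining (Suc m) = total_remaining m - (if pick m = None then 0 else 1)"
proof (cases "pick m")
  case (Some j)
  then have j: "j \<in> eligible" by (rule pick_eligible)
  have "remaining (Suc m) = (remaining m)(j := remaining m j - 1)"
    using Some by (simp add: remaining_Suc)
  then show ?thesis using Some
    unfolding total_remaining_def by (simp only: sum_fun_upd[OF finite_eligible j]) simp
qed (simp add: total_remaining_def remaining_Suc)

lemma total_remaining_pos: "pick m = Some j \<Longrightarrow> total_remaining m > 0"
proof -
  assume "pick m = Some j"
  then have j: "j \<in> avail m" by (rule pick_SomeD)
  then have "remaining m j \<le> total_remaining m"
    unfolding total_remaining_def avail_def
    by (intro member_le_sum) (auto intro: remaining_nonneg finite_eligible)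
  then show ?thesis using j by (auto simp: avail_def)
qed

lemma remaining_eventually_zero: "\<exists>m. \<forall>j\<in>eligible. remaining m j = 0"
proof -
  \<comment> \<open>from offset \<open>M\<close> on every eligible job is released, so each idle slot means all work is done\<close>
  define M where "M = (\<Sum>x\<in>eligible. nat (r x - r s))"
  have released: "r x \<le> r s + int M" if "x \<in> eligible" for x
  proof -
    have "nat (r x - r s) \<le> M"
      unfolding M_def by (rule member_le_sum) (use that finite_eligible in auto)
    then show ?thesis using that eligibleD by auto
  qed
  have idle: "total_remaining m = 0" if "M \<le> m" "pick m = None" for m
  proof -
    have "remaining m x = 0" if x: "x \<in> eligible" for x
    proof -
      have "x \<notin> avail m" using \<open>pick m = None\<close> pick_eq_None_iff by simp
      then show ?thesis
        using remaining_nonneg[OF x, of m] released[OF x] \<open>M \<le> m\<close> x unfolding avail_def by simp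
    qed
    then show ?thesis unfolding total_remaining_def by simp
  qed
  have decay: "total_remaining (M + q) \<le> max 0 (total_remaining M - int q)" for q
  proof (induction q)
    case (Suc q)
    then show ?case
      using idle[of "M + q"] total_remaining_Suc[of "M + q"] total_remaining_pos[of "M + q"]
      by (cases "pick (M + q)") auto
  qed simp
  have "total_remaining (M + nat (total_remaining M)) \<le> 0"
    using decay[of "nat (total_remaining M)"] total_remaining_nonneg[of M] by simp
  then have "total_remaining (M + nat (total_remaining M)) = 0"
    using total_remaining_nonneg by (meson order.antisym)
  then show ?thesis unfolding total_remaining_def
    using sum_nonneg_eq_0_iff[OF finite_eligible] remaining_nonneg by blast
qed

definition done_at :: "nat \<Rightarrow> nat" where
  "done_at j = (LEAST m. remaining m j = 0)"

lemma remaining_eq_0_iff: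
  assumes j: "j \<in> eligible"
  shows "remaining m j = 0 \<longleftrightarrow> done_at j \<le> m"
proof -
  obtain m0 where "remaining m0 j = 0" using remaining_eventually_zero j by blast
  then have finished: "remaining (done_at j) j = 0" unfolding done_at_def by (rule LeastI)
  show ?thesis
  proof
    show "remaining m j = 0 \<Longrightarrow> done_at j \<le> m" unfolding done_at_def by (rule Least_le)
    show "done_at j \<le> m \<Longrightarrow> remaining m j = 0"
      using remaining_antimono[of "done_at j" m j] finished remaining_nonneg[OF j, of m] by simp
  qed
qed

lemma remaining_pos_iff: "j \<in> eligible \<Longrightarrow> remaining m j > 0 \<longleftrightarrow> m < done_at j"
  using remaining_eq_0_iff remaining_nonneg by (metis not_le order_less_le)

lemma pick_less_done_at: "pick m = Some j \<Longrightarrow> m < done_at j"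
  using pick_SomeD(1) remaining_pos_iff unfolding avail_def by blast

lemma done_at_pos: "j \<in> eligible \<Longrightarrow> 0 < done_at j"
  using remaining_pos_iff[of j 0] p_pos eligibleD by force

lemma pick_last: assumes j: "j \<in> eligible" shows "pick (done_at j - 1) = Some j"
proof -
  have "remaining (Suc (done_at j - 1)) j = 0" "remaining (done_at j - 1) j > 0"
    using remaining_eq_0_iff[OF j] remaining_pos_iff[OF j] done_at_pos[OF j] by simp_all
  then have "remaining (Suc (done_at j - 1)) j \<noteq> remaining (done_at j - 1) j" by simp
  then show ?thesis using remaining_Suc_not_picked by blast
qed

lemma release_less_done_at: "j \<in> eligible \<Longrightarrow> r j < r s + int (done_at j)"
  using pick_SomeD(1)[OF pick_last] done_at_pos unfolding avail_def by fastforce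

lemma card_picks: "j \<in> eligible \<Longrightarrow> int (card {m. m < M \<and> pick m = Some j}) = p j - remaining M j"
proof (induction M)
  case (Suc M)
  show ?case
  proof (cases "pick M = Some j")
    case True
    then have "{m. m < Suc M \<and> pick m = Some j} = insert M {m. m < M \<and> pick m = Some j}"
      by (auto simp: less_Suc_eq)
    then show ?thesis using Suc True remaining_Suc_picked[OF True] by simp
  next
    case False
    then have "{m. m < Suc M \<and> pick m = Some j} = {m. m < M \<and> pick m = Some j}"
      by (auto simp: less_Suc_eq)
    then show ?thesis using Suc remaining_Suc_not_picked[OF False] by simp
  qed
qed simp

lemma greedy_eq_Some_iff: "G t = Some j \<longleftrightarrow> (\<exists>m. t = r s + int m \<and> pick m = Some j)"
  unfolding greedy_def by (auto split: if_splits intro!: exI[of _ "nat (t - r s)"])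

lemma greedy_slots:
  "j \<in> eligible \<Longrightarrow> {t. G t = Some j} = (\<lambda>m. r s + int m) ` {m. m < done_at j \<and> pick m = Some j}"
  using greedy_eq_Some_iff pick_less_done_at by auto

lemma card_greedy_slots: "j \<in> eligible \<Longrightarrow> int (card {t. G t = Some j}) = p j"
  using card_picks[of j "done_at j"] remaining_eq_0_iff[of j "done_at j"]
  by (simp add: greedy_slots card_image inj_on_def)

lemma sched_jobs_greedy: "sched_jobs G = eligible"
  unfolding sched_jobs_def using greedy_eq_Some_iff pick_eligible pick_last by blast

lemma compl_greedy: assumes j: "j \<in> eligible" shows "compl G j = r s + int (done_at j)"
proof -
  have eq: "{t + 1 | t. G t = Some j} = (\<lambda>t. t + 1) ` {t. G t = Some j}" by auto
  show ?thesis
    unfolding compl_def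
  proof (rule Max_eqI)
    show "finite {t + 1 | t. G t = Some j}" unfolding eq greedy_slots[OF j] by simp
    show "x \<le> r s + int (done_at j)" if "x \<in> {t + 1 | t. G t = Some j}" for x
      using that greedy_eq_Some_iff pick_less_done_at by fastforce
    show "r s + int (done_at j) \<in> {t + 1 | t. G t = Some j}"
      using greedy_eq_Some_iff[of "r s + int (done_at j - 1)" j] pick_last[OF j] done_at_pos[OF j]
      by (intro CollectI exI[of _ "r s + int (done_at j - 1)"]) auto
  qed
qed

subsection \<open>Busy periods of the greedy schedule\<close>

definition eligible_upto :: "nat \<Rightarrow> nat set" where
  "eligible_upto i = {x \<in> eligible. x \<le> i}"

definition backlog :: "nat \<Rightarrow> nat \<Rightarrow> int" where
  "backlog i m = (\<Sum>x\<in>{x \<in> eligible_upto i. r x < r s + int m}. remaining m x)"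

lemma finite_eligible_upto: "finite {x \<in> eligible_upto i. P x}"
  unfolding eligible_upto_def using finite_eligible by simp

lemma backlog_nonneg: "backlog i m \<ge> 0"
  unfolding backlog_def eligible_upto_def by (intro sum_nonneg) (auto intro: remaining_nonneg)

lemma backlog_0: "backlog i 0 = 0"
  unfolding backlog_def eligible_upto_def eligible_def by (simp add: sum.neutral)

lemma backlog_Suc_busy:
  assumes i: "i \<in> eligible" and busy: "eligible_upto i \<inter> avail m \<noteq> {}"
  shows "backlog i (Suc m) = backlog i m + load p r i (r s + int m) (r s + int m + 1) - 1"
proof -
  obtain x where x: "x \<in> eligible_upto i" "x \<in> avail m" using busy by blast
  then obtain j where pj: "pick m = Some j" using pick_eq_None_iff[of m] by auto
  \<comment> \<open>the picked job has a deadline at most \<open>d x \<le> d i\<close>, hence it is a job \<open>j \<le> i\<close> as well\<close>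
  have "d j \<le> d x" "d x \<le> d i"
    using pick_SomeD[OF pj] x d_le eligibleD i unfolding eligible_upto_def avail_def by auto
  then have "j \<le> i" using le_if_d_le pick_SomeD(1)[OF pj] eligibleD i unfolding avail_def by force
  then have jX: "j \<in> eligible_upto i" using pick_eligible[OF pj] by (simp add: eligible_upto_def)
  define Y where "Y = {x \<in> eligible_upto i. r x < r s + int m}"
  define N where "N = {x \<in> eligible_upto i. r x = r s + int m}"
  have Y': "{x \<in> eligible_upto i. r x < r s + int (Suc m)} = Y \<union> N" unfolding Y_def N_def by auto
  have fin: "finite Y" "finite N" unfolding Y_def N_def using finite_eligible_upto by auto
  have jYN: "j \<in> Y \<union> N" using jX pick_SomeD(1)[OF pj] unfolding Y_def N_def avail_def by auto
  have "remaining (Suc m) = (remaining m)(j := remaining m j - 1)"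
    using pj by (simp add: remaining_Suc)
  then have "backlog i (Suc m) = sum (remaining m) (Y \<union> N) - 1"
    unfolding backlog_def Y' by (simp only: sum_fun_upd[OF _ jYN] fin finite_UnI)
  also have "sum (remaining m) (Y \<union> N) = sum (remaining m) Y + sum (remaining m) N"
    by (rule sum.union_disjoint) (use fin in \<open>auto simp: Y_def N_def\<close>)
  also have "sum (remaining m) N = sum p N"
    by (rule sum.cong) (auto simp: N_def intro: remaining_unreleased)
  also have "sum p N = load p r i (r s + int m) (r s + int m + 1)"
    unfolding load_def N_def eligible_upto_def
    by (rule sum.cong) (use i in \<open>auto simp: eligible_def\<close>)
  finally show ?thesis unfolding backlog_def Y_def by simp
qed

lemma backlog_Suc_idle:
  assumes i: "i \<in> eligible" and idle: "eligible_upto i \<inter> avail m = {}"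
  shows "backlog i (Suc m) = 0"
proof -
  have "remaining m x = 0" if "x \<in> eligible_upto i" "r x \<le> r s + int m" for x
    using idle that remaining_nonneg[of x m] unfolding eligible_upto_def avail_def by force
  then have "remaining (Suc m) x = 0" if "x \<in> eligible_upto i" "r x \<le> r s + int m" for x
    using that remaining_antimono[of m "Suc m" x] remaining_nonneg[of x "Suc m"]
    unfolding eligible_upto_def by force
  then show ?thesis unfolding backlog_def by (intro sum.neutral) auto
qed

lemma backlog_busy_interval:
  assumes i: "i \<in> eligible"
    and busy: "\<And>m. m0 \<le> m \<Longrightarrow> m < m1 \<Longrightarrow> eligible_upto i \<inter> avail m \<noteq> {}"
    and "m0 \<le> m" "m \<le> m1"
  shows "backlog i m = backlog i m0 + load p r i (r s + int m0) (r s + int m) - int (m - m0)"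
  using \<open>m0 \<le> m\<close>
proof (induction m rule: dec_induct)
  case (step q)
  have "load p r i (r s + int m0) (r s + int q + 1) =
        load p r i (r s + int m0) (r s + int q) + load p r i (r s + int q) (r s + int q + 1)"
    using step.hyps by (intro load_split) simp_all
  then show ?case
    using backlog_Suc_busy[OF i busy] step \<open>m \<le> m1\<close> by (simp add: Suc_diff_le ac_simps)
qed (simp add: load_empty_interval)

lemma backlog_done_at: assumes j: "j \<in> eligible" shows "backlog j (done_at j) = 0"
  unfolding backlog_def
proof (intro sum.neutral ballI)
  fix x assume x: "x \<in> {x \<in> eligible_upto j. r x < r s + int (done_at j)}"
  then have xJ: "x \<in> eligible" and "x \<le> j" by (auto simp: eligible_upto_def)
  show "remaining (done_at j) x = 0"
  proof (cases "x = j")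
    case False
    \<comment> \<open>otherwise \<open>x\<close>, with \<open>d x < d j\<close>, would have been preferred to \<open>j\<close> at its last slot\<close>
    have "d x < d j" using d_mono \<open>x \<le> j\<close> False eligibleD xJ j by simp
    then have "x \<notin> avail (done_at j - 1)" using pick_SomeD(2)[OF pick_last[OF j]] by force
    then have "remaining (done_at j - 1) x \<le> 0"
      using x xJ done_at_pos[OF j] unfolding avail_def by auto
    then have "done_at x \<le> done_at j - 1" using remaining_pos_iff[OF xJ] by (meson not_le)
    then show ?thesis using remaining_eq_0_iff[OF xJ] by simp
  qed (simp add: remaining_eq_0_iff[OF j])
qed

lemma backlog_pos_before_done_at:
  assumes j: "j \<in> eligible" and "r j < r s + int m" "m < done_at j"
  shows "backlog j m > 0"
proof -
  have "j \<in> {x \<in> eligible_upto j. r x < r s + int m}"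
    using assms by (auto simp: eligible_upto_def)
  then have "remaining m j \<le> backlog j m" unfolding backlog_def
    by (rule member_le_sum) (use finite_eligible_upto remaining_nonneg in \<open>auto simp: eligible_upto_def\<close>)
  moreover have "remaining m j > 0" using remaining_pos_iff[OF j] assms(3) by simp
  ultimately show ?thesis by simp
qed

lemma busy_period_start:
  assumes j: "j \<in> eligible"
  obtains m0 where "r s + int m0 \<le> r j" "backlog j m0 = 0"
    "\<And>m. m0 \<le> m \<Longrightarrow> m < done_at j \<Longrightarrow> eligible_upto j \<inter> avail m \<noteq> {}"
    "\<And>m. m0 < m \<Longrightarrow> m < done_at j \<Longrightarrow> backlog j m > 0"
proof -
  define aj where "aj = nat (r j - r s)"
  have rj: "r j = r s + int aj" using eligibleD[OF j] unfolding aj_def by auto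
  define m0 where "m0 = (GREATEST m. m \<le> aj \<and> backlog j m = 0)"
  have m0: "m0 \<le> aj \<and> backlog j m0 = 0"
    unfolding m0_def by (rule GreatestI_nat[where k = 0 and b = aj]) (auto simp: backlog_0)
  have pos: "backlog j m > 0" if "m0 < m" "m < done_at j" for m
  proof (cases "m \<le> aj")
    case True
    have "backlog j m \<noteq> 0"
    proof
      assume "backlog j m = 0"
      have "m \<le> m0"
        unfolding m0_def by (rule Greatest_le_nat[where b = aj]) (use True \<open>backlog j m = 0\<close> in auto)
      with that(1) show False by simp
    qed
    then show ?thesis using backlog_nonneg[of j m] by simp
  qed (use backlog_pos_before_done_at[OF j] rj that(2) in simp)
  have busy: "eligible_upto j \<inter> avail m \<noteq> {}" if "m0 \<le> m" "m < done_at j" for m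
  proof (cases "Suc m < done_at j")
    case True
    then show ?thesis using pos[of "Suc m"] backlog_Suc_idle[OF j, of m] that by force
  next
    case False
    then have "m = done_at j - 1" using that(2) by simp
    then have "pick m = Some j" using pick_last[OF j] by simp
    then show ?thesis using pick_SomeD(1) j by (auto simp: eligible_upto_def)
  qed
  show ?thesis
  proof (rule that)
    show "r s + int m0 \<le> r j" using m0 rj by simp
  qed (fact m0[THEN conjunct2] busy pos)+
qed

lemma load_bound_greedy:
  assumes j: "j \<in> eligible"
  obtains l where "1 \<le> l" "l \<le> j" "r s \<le> r l" "r l \<le> r j"
    "load_bound p r j l = r s + int (done_at j)"
proof -
  obtain m0 where m0: "r s + int m0 \<le> r j" "backlog j m0 = 0"
      and busy: "\<And>m. m0 \<le> m \<Longrightarrow> m < done_at j \<Longrightarrow> eligible_upto j \<inter> avail m \<noteq> {}"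
      and pos: "\<And>m. m0 < m \<Longrightarrow> m < done_at j \<Longrightarrow> backlog j m > 0"
    using busy_period_start[OF j] by blast
  define T where "T = r s + int m0"
  define C where "C = r s + int (done_at j)"
  have rjC: "r j < C" using release_less_done_at[OF j] unfolding C_def .
  have closed: "backlog j m = load p r j T (r s + int m) - int (m - m0)"
    if "m0 \<le> m" "m \<le> done_at j" for m
    using backlog_busy_interval[OF j busy that] m0(2) unfolding T_def by simp
  have "m0 < done_at j" using m0(1) rjC unfolding C_def by simp
  then have "backlog j (m0 + 1) = load p r j T (T + 1) - 1"
    using closed[of "m0 + 1"] unfolding T_def by (simp add: algebra_simps)
  then have "load p r j T (T + 1) \<noteq> 0" using backlog_nonneg[of j "m0 + 1"] by simp
  then have "{x. 1 \<le> x \<and> x \<le> j \<and> T \<le> r x \<and> r x < T + 1} \<noteq> {}"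
    unfolding load_def by (metis sum.empty)
  then obtain l where l: "1 \<le> l" "l \<le> j" "r l = T" by force
  have "load_bound p r j l = C"
  proof (rule load_bound_eqI[where r = r and i = j and l = l, OF rjC])
    show "r l + load p r j (r l) C \<le> C"
      using closed[of "done_at j"] backlog_done_at[OF j] \<open>m0 < done_at j\<close> l(3)
      unfolding T_def C_def by simp
    show "b < r l + load p r j (r l) b" if "r j < b" "b < C" for b
    proof -
      define m where "m = nat (b - r s)"
      have b: "b = r s + int m" "m0 < m" "m < done_at j"
        using that m0(1) unfolding m_def C_def by auto
      then show ?thesis using closed[of m] pos[of m] l(3) unfolding T_def by simp
    qed
  qed
  then show ?thesis using that l m0(1) eligibleD[OF j] unfolding T_def C_def by simp
qed

end

locale feasible_job_instance = job_instance +
  assumes feasible: "\<exists>S. valid_sched n p r d S \<and> sched_jobs S = {1..n}"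
begin

lemma done_at_le_deadline:
  assumes j: "j \<in> eligible"
  shows "r s + int (done_at j) \<le> d j"
proof (rule ccontr)
  assume "\<not> ?thesis"
  then have late: "d j < r s + int (done_at j)" by simp
  obtain S0 where S0: "valid_sched n p r d S0" "sched_jobs S0 = {1..n}" using feasible by blast
  have jS: "j \<in> sched_jobs S0" using S0(2) eligibleD[OF j] by auto
  then obtain t where "S0 t = Some j" unfolding sched_jobs_def by auto
  then have rd: "r j < d j" using valid_sched_slot[OF S0(1)] by fastforce
  obtain l where l: "r s \<le> r l" "r l \<le> r j" "load_bound p r j l = r s + int (done_at j)"
    using load_bound_greedy[OF j] by blast
  \<comment> \<open>\<open>d\<^sub>j\<close> lies strictly below the least admissible \<open>b\<close>, so the jobs in \<open>[r\<^sub>l, d\<^sub>j)\<close> do not fit\<close>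
  have overload: "d j - r l < load p r j (r l) (d j)"
    using load_bound_le[where p = p and r = r and i = j and b = "d j" and l = l] rd late l(3) by force
  define A where "A = {x. 1 \<le> x \<and> x \<le> j \<and> r l \<le> r x \<and> r x < d j}"
  have finA: "finite A" unfolding A_def by (rule finite_subset[of _ "{..j}"]) auto
  have AS: "A \<subseteq> sched_jobs S0" unfolding A_def S0(2) using eligibleD[OF j] by auto
  have "r l \<le> t \<and> t < d j" if "x \<in> A" "S0 t = Some x" for x t
    using valid_sched_slot[OF S0(1) \<open>S0 t = Some x\<close>] d_le[of x j] eligibleD[OF j] that
    unfolding A_def by fastforce
  then have "sum p A \<le> d j - r l"
    by (rule valid_sched_sum_p_le[OF S0(1) finA AS]) (use rd l in auto)
  then show False using overload unfolding load_def A_def by simp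
qed

lemma greedy_valid: "valid_sched n p r d G"
  unfolding valid_sched_def
proof (rule conjI; intro allI impI ballI)
  fix t j assume "G t = Some j"
  then obtain m where m: "t = r s + int m" "pick m = Some j" using greedy_eq_Some_iff by blast
  have "j \<in> avail m" "j \<in> eligible" using pick_SomeD(1)[OF m(2)] by (auto simp: avail_def)
  moreover have "t < d j"
    using pick_less_done_at[OF m(2)] done_at_le_deadline[OF \<open>j \<in> eligible\<close>] m(1) by simp
  ultimately show "1 \<le> j \<and> j \<le> n \<and> r j \<le> t \<and> t < d j"
    using eligibleD m(1) by (auto simp: avail_def)
next
  fix j assume "j \<in> sched_jobs G"
  then show "int (card {t. G t = Some j}) = p j" using card_greedy_slots sched_jobs_greedy by simp
qed

lemma greedy_sk_schedule:
  assumes "eligible \<noteq> {}"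
  shows "sk_schedule n p r d s k G"
proof -
  have cmax: "cmax r s G = Max (compl G ` eligible)"
    unfolding cmax_def sched_jobs_greedy using assms by simp
  have "compl G j \<le> d k" if "j \<in> eligible" for j
    using compl_greedy[OF that] done_at_le_deadline[OF that] d_le[of j k] eligibleD[OF that] k_le_n
    by simp
  then have "cmax r s G \<le> d k"
    unfolding cmax using finite_eligible assms by simp
  moreover have "r j < cmax r s G" if "j \<in> eligible" for j
  proof -
    have "compl G j \<le> cmax r s G" unfolding cmax using finite_eligible that by simp
    then show ?thesis using compl_greedy[OF that] release_less_done_at[OF that] by simp
  qed
  then have "sched_jobs G = {j. 1 \<le> j \<and> j \<le> k \<and> r s \<le> r j \<and> r j < cmax r s G}"
    unfolding sched_jobs_greedy by (auto simp: eligible_def)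
  ultimately show ?thesis unfolding sk_schedule_def using greedy_valid by simp
qed

lemma greedy_edf: "edf r d G"
  unfolding edf_def
proof (intro allI impI ballI)
  fix t j j' assume "G t = Some j" and j': "j' \<in> sched_jobs G" and t: "r j' \<le> t \<and> t < compl G j'"
  obtain m where m: "t = r s + int m" "pick m = Some j"
    using \<open>G t = Some j\<close> greedy_eq_Some_iff by blast
  have j'J: "j' \<in> eligible" using j' sched_jobs_greedy by simp
  then have "m < done_at j'" using t m(1) compl_greedy by simp
  then have "j' \<in> avail m" using j'J t m(1) remaining_pos_iff[OF j'J] unfolding avail_def by simp
  then show "d j \<le> d j'" using pick_SomeD(2)[OF m(2)] by blast
qed

end

theorem lemma1:
  fixes n :: nat and p r d :: "nat \<Rightarrow> int" and s k i :: nat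
  assumes p_pos: "\<And>j. 1 \<le> j \<Longrightarrow> j \<le> n \<Longrightarrow> p j \<ge> 1"
    and d_mono: "\<And>j j'. 1 \<le> j \<Longrightarrow> j < j' \<Longrightarrow> j' \<le> n \<Longrightarrow> d j < d j'"
    and r_dist: "inj_on r {1..n}"
    and feasible: "\<exists>S. valid_sched n p r d S \<and> sched_jobs S = {1..n}"
    and s: "1 \<le> s" "s \<le> n"
    and k: "k \<le> n"
    and i: "1 \<le> i" "i \<le> k"
    and ri: "r i \<ge> r s"
  shows "compl (greedy p r d s k) i \<in>
           {compl S i | S. sk_schedule n p r d s k S \<and> edf r d S \<and> i \<in> sched_jobs S}
       \<and> (\<forall>S. sk_schedule n p r d s k S \<and> edf r d S \<and> i \<in> sched_jobs S
              \<longrightarrow> compl (greedy p r d s k) i \<le> compl S i)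
       \<and> compl (greedy p r d s k) i =
           Max ((\<lambda>l. LEAST b. b > r i \<and> b \<ge> r l + load p r i (r l) b)
                 ` {l. 1 \<le> l \<and> l \<le> i \<and> r s \<le> r l \<and> r l \<le> r i})"
proof -
  interpret feasible_job_instance n p r d s k
    by unfold_locales (fact p_pos d_mono k feasible)+
  let ?L = "{l. 1 \<le> l \<and> l \<le> i \<and> r s \<le> r l \<and> r l \<le> r i}"
  have iJ: "i \<in> eligible" using i ri by (simp add: eligible_def)
  have G: "sk_schedule n p r d s k G" "edf r d G" "i \<in> sched_jobs G"
    using greedy_sk_schedule greedy_edf sched_jobs_greedy iJ by auto
  obtain l0 where l0: "l0 \<in> ?L" "load_bound p r i l0 = compl G i"
    using load_bound_greedy[OF iJ] compl_greedy[OF iJ] by auto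
  have lower: "load_bound p r i l \<le> compl S i"
    if "sk_schedule n p r d s k S" "edf r d S" "i \<in> sched_jobs S" "l \<in> ?L" for S l
    using that by (intro load_bound_le_compl) auto
  have "finite ?L" by (rule finite_subset[of _ "{..i}"]) auto
  moreover have "compl G i \<in> load_bound p r i ` ?L"
    unfolding l0(2)[symmetric] using l0(1) by (rule imageI)
  ultimately have "compl G i = Max (load_bound p r i ` ?L)"
    using lower[OF G] by (intro Max_eqI[symmetric]) auto
  moreover have "\<forall>S. sk_schedule n p r d s k S \<and> edf r d S \<and> i \<in> sched_jobs S
                   \<longrightarrow> compl G i \<le> compl S i"
    using lower l0 by fastforce
  moreover have "compl G i \<in> {compl S i | S. sk_schedule n p r d s k S \<and> edf r d S \<and> i \<in> sched_jobs S}"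
    using G by blast
  ultimately show ?thesis unfolding load_bound_def by blast
qed

end
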